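(* Let $P$ be a finite lattice. The following are equivalent: (i) $P$ is linearly ordered; (ii) the lattice $(\mathcal{L}_P,\le)$ is distributive; (iii) the lattice $(\mathcal{L}_P,\le)$ is modular.
   Context: For a finite lattice $P$, $\mathcal{L}_P$ denotes the set of maps $f:P\to P$ satisfying (A.1) $a\le f(a)$ for all $a$; (A.2) $a\le b$ implies $f(a)\le f(b)$; (A.3) $f(f(a))=f(a)$, ordered pointwise ($f\le g$ iff $f(a)\le g(a)$ for all $a$); this order makes $\mathcal{L}_P$ a lattice. *)

theory Defs
  imports Main
begin

text \<open>The set L_P of closure operators on an ordered type; it is ordered by the
  pointwise order on functions, which is Isabelle's built-in order on function types.\<close>
definition closure_ops :: "('a::order \<Rightarrow> 'a) set" where
  "closure_ops = {f. (\<forall>a. a \<le> f a) \<and> (\<forall>a b. a \<le> b \<longrightarrow> f a \<le> f b) \<and> (\<forall>a. f (f a) = f a)}"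

definition is_lub_in :: "'b::order set \<Rightarrow> 'b \<Rightarrow> 'b \<Rightarrow> 'b \<Rightarrow> bool" where
  "is_lub_in S x y z \<longleftrightarrow> z \<in> S \<and> x \<le> z \<and> y \<le> z \<and> (\<forall>w\<in>S. x \<le> w \<and> y \<le> w \<longrightarrow> z \<le> w)"

definition is_glb_in :: "'b::order set \<Rightarrow> 'b \<Rightarrow> 'b \<Rightarrow> 'b \<Rightarrow> bool" where
  "is_glb_in S x y z \<longleftrightarrow> z \<in> S \<and> z \<le> x \<and> z \<le> y \<and> (\<forall>w\<in>S. w \<le> x \<and> w \<le> y \<longrightarrow> w \<le> z)"

definition join_in :: "'b::order set \<Rightarrow> 'b \<Rightarrow> 'b \<Rightarrow> 'b" where
  "join_in S x y = (THE z. is_lub_in S x y z)"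

definition meet_in :: "'b::order set \<Rightarrow> 'b \<Rightarrow> 'b \<Rightarrow> 'b" where
  "meet_in S x y = (THE z. is_glb_in S x y z)"

definition distributive_in :: "'b::order set \<Rightarrow> bool" where
  "distributive_in S \<longleftrightarrow> (\<forall>x\<in>S. \<forall>y\<in>S. \<forall>z\<in>S.
     meet_in S x (join_in S y z) = join_in S (meet_in S x y) (meet_in S x z))"

definition modular_in :: "'b::order set \<Rightarrow> bool" where
  "modular_in S \<longleftrightarrow> (\<forall>x\<in>S. \<forall>y\<in>S. \<forall>z\<in>S.
     x \<le> z \<longrightarrow> join_in S x (meet_in S y z) = meet_in S (join_in S x y) z)"

end

theory Submission
  imports Defs
begin

text \<open>A closure operator is determined by its set of fixpoints, and \<open>f \<le> g\<close> iff every
  \<open>g\<close>-fixpoint is an \<open>f\<close>-fixpoint. The fixpoint sets are exactly the closure systems: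
  subsets containing the top and closed under binary meets. The join of two closure
  operators has the intersection of their fixpoint sets as fixpoints. In a chain every
  set containing the top is a closure system, so the meet has the union as fixpoints;
  hence \<open>\<L>\<^sub>P\<close> is anti-isomorphic to a lattice of sets and therefore distributive.
  If \<open>a, b\<close> are incomparable, the closure systems \<open>{\<top>}\<close>, \<open>{a,\<top>}\<close>, \<open>{b,\<top>}\<close>,
  \<open>{a\<sqinter>b,a,\<top>}\<close>, \<open>{a\<sqinter>b,a,b,\<top>}\<close> yield a pentagon in \<open>\<L>\<^sub>P\<close>, so it is not even modular.\<close>

definition fixpoints :: "('a \<Rightarrow> 'a) \<Rightarrow> 'a set" where
  "fixpoints f = {x. f x = x}"

definition closure_system :: "'a::{finite,lattice} set \<Rightarrow> bool" where
  "closure_system S \<longleftrightarrow> Sup_fin UNIV \<in> S \<and> (\<forall>x\<in>S. \<forall>y\<in>S. inf x y \<in> S)"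

definition closure_of_system :: "'a::{finite,lattice} set \<Rightarrow> 'a \<Rightarrow> 'a" where
  "closure_of_system S x = Inf_fin {y \<in> S. x \<le> y}"

lemma join_in_eqI: "is_lub_in S x y z \<Longrightarrow> join_in S x y = z"
  unfolding join_in_def by (rule the_equality) (auto simp: is_lub_in_def dest: antisym)

lemma meet_in_eqI: "is_glb_in S x y z \<Longrightarrow> meet_in S x y = z"
  unfolding meet_in_def by (rule the_equality) (auto simp: is_glb_in_def dest: antisym)

lemma meet_in_commute: "meet_in S x y = meet_in S y x"
proof -
  have "is_glb_in S x y = is_glb_in S y x"
    by (auto simp: is_glb_in_def)
  then show ?thesis by (simp add: meet_in_def)
qed

lemma join_in_absorb1: "x \<in> S \<Longrightarrow> y \<le> x \<Longrightarrow> join_in S x y = x"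
  by (rule join_in_eqI) (auto simp: is_lub_in_def)

lemma meet_in_absorb1: "x \<in> S \<Longrightarrow> x \<le> y \<Longrightarrow> meet_in S x y = x"
  by (rule meet_in_eqI) (auto simp: is_glb_in_def)

lemma meet_in_absorb2: "y \<in> S \<Longrightarrow> y \<le> x \<Longrightarrow> meet_in S x y = y"
  by (rule meet_in_eqI) (auto simp: is_glb_in_def)

lemma pentagon_not_modular_distributive:
  assumes "{u, p, q, y, t} \<subseteq> S" and "u \<le> p" "p \<le> q" "q \<le> t" "p \<noteq> q"
    and meet_qy: "meet_in S q y = u" and join_py: "join_in S p y = t"
  shows "\<not> modular_in S" "\<not> distributive_in S"
proof -
  have S: "u \<in> S" "p \<in> S" "q \<in> S" "y \<in> S" "t \<in> S"
    using assms(1) by auto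
  have "join_in S p (meet_in S y q) = p" "meet_in S (join_in S p y) q = q"
    using S assms(2,4)
    by (simp_all add: meet_in_commute[of S y] meet_qy join_py join_in_absorb1 meet_in_absorb2)
  moreover have "modular_in S \<Longrightarrow> join_in S p (meet_in S y q) = meet_in S (join_in S p y) q"
    using S assms(3) unfolding modular_in_def by blast
  ultimately show "\<not> modular_in S"
    using assms(5) by auto
  have "meet_in S q (join_in S p y) = q" "join_in S (meet_in S q p) (meet_in S q y) = p"
    using S assms(2-4)
    by (simp_all add: meet_qy join_py join_in_absorb1 meet_in_absorb1 meet_in_absorb2)
  moreover have "distributive_in S \<Longrightarrow>
      meet_in S q (join_in S p y) = join_in S (meet_in S q p) (meet_in S q y)"
    using S unfolding distributive_in_def by blast
  ultimately show "\<not> distributive_in S"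
    using assms(5) by auto
qed

lemma closure_opsD:
  assumes "f \<in> closure_ops"
  shows "a \<le> f a" "a \<le> b \<Longrightarrow> f a \<le> f b" "f (f a) = f a"
  using assms unfolding closure_ops_def by auto

lemma closure_ops_le_iff_fixpoints:
  assumes f: "f \<in> closure_ops" and g: "g \<in> closure_ops"
  shows "f \<le> g \<longleftrightarrow> fixpoints g \<subseteq> fixpoints f"
proof
  assume "f \<le> g"
  then show "fixpoints g \<subseteq> fixpoints f"
    using closure_opsD(1)[OF f] by (auto simp: fixpoints_def le_fun_def) (metis antisym)
next
  assume fix_sub: "fixpoints g \<subseteq> fixpoints f"
  show "f \<le> g"
  proof (rule le_funI)
    fix x
    have "f (g x) = g x"
      using fix_sub closure_opsD(3)[OF g] by (auto simp: fixpoints_def)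
    then show "f x \<le> g x"
      using closure_opsD(2)[OF f closure_opsD(1)[OF g]] by metis
  qed
qed

lemma closure_ops_eqI:
  "f \<in> closure_ops \<Longrightarrow> g \<in> closure_ops \<Longrightarrow> fixpoints f = fixpoints g \<Longrightarrow> f = g"
  using closure_ops_le_iff_fixpoints by (metis antisym order_refl)

lemma le_Sup_fin_UNIV: "x \<le> Sup_fin (UNIV :: 'a::{finite,lattice} set)"
  by (rule Sup_fin.coboundedI) auto

lemma closure_system_fixpoints:
  assumes f: "f \<in> closure_ops"
  shows "closure_system (fixpoints f)"
proof -
  have "f (Sup_fin UNIV) = Sup_fin UNIV"
    using closure_opsD(1)[OF f] le_Sup_fin_UNIV by (metis antisym)
  moreover have "f (inf x y) = inf x y" if "f x = x" "f y = y" for x y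
    using that closure_opsD[OF f] by (metis antisym inf.cobounded1 inf.cobounded2 le_inf_iff)
  ultimately show ?thesis by (auto simp: closure_system_def fixpoints_def)
qed

lemma Inf_fin_mem_inf_closed:
  assumes "finite A" "A \<noteq> {}" "A \<subseteq> S" "\<forall>x\<in>S. \<forall>y\<in>S. inf x y \<in> S"
  shows "Inf_fin A \<in> S"
  using assms(1-3)
proof (induction A rule: finite_ne_induct)
  case (insert x F)
  then show ?case using assms(4) by simp
qed simp

lemma
  fixes S :: "'a::{finite,lattice} set"
  assumes S: "closure_system S"
  shows closure_of_system_mem: "closure_of_system S x \<in> S"
    and le_closure_of_system: "x \<le> closure_of_system S x"
    and closure_of_system_least: "y \<in> S \<Longrightarrow> x \<le> y \<Longrightarrow> closure_of_system S x \<le> y"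
proof -
  have ne: "{y \<in> S. x \<le> y} \<noteq> {}"
    using S le_Sup_fin_UNIV[of x] by (auto simp: closure_system_def)
  show "closure_of_system S x \<in> S"
    unfolding closure_of_system_def
    using S ne by (intro Inf_fin_mem_inf_closed) (auto simp: closure_system_def)
  show "x \<le> closure_of_system S x"
    unfolding closure_of_system_def using ne by (simp add: Inf_fin.bounded_iff)
  show "y \<in> S \<Longrightarrow> x \<le> y \<Longrightarrow> closure_of_system S x \<le> y"
    unfolding closure_of_system_def by (rule Inf_fin.coboundedI) auto
qed

lemma closure_of_system_closure_ops:
  assumes S: "closure_system S"
  shows "closure_of_system S \<in> closure_ops"
    and "fixpoints (closure_of_system S) = S"
proof -
  note cl = closure_of_system_mem[OF S] le_closure_of_system[OF S] closure_of_system_least[OF S]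
  have fixed: "closure_of_system S y = y" if "y \<in> S" for y
    using cl that by (meson antisym order_refl)
  then show "fixpoints (closure_of_system S) = S"
    using cl(1) by (auto simp: fixpoints_def) (metis)
  moreover have "closure_of_system S x \<le> closure_of_system S x'" if "x \<le> x'" for x x'
    using cl that by (meson order_trans)
  ultimately show "closure_of_system S \<in> closure_ops"
    unfolding closure_ops_def using cl fixed by auto
qed

lemma closure_ops_join:
  fixes f g :: "'a::{finite,lattice} \<Rightarrow> 'a"
  assumes f: "f \<in> closure_ops" and g: "g \<in> closure_ops"
  shows "join_in closure_ops f g \<in> closure_ops"
    and "fixpoints (join_in closure_ops f g) = fixpoints f \<inter> fixpoints g"
proof -
  have S: "closure_system (fixpoints f \<inter> fixpoints g)"
    using closure_system_fixpoints[OF f] closure_system_fixpoints[OF g]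
    by (auto simp: closure_system_def)
  note cl = closure_of_system_closure_ops[OF S]
  have "is_lub_in closure_ops f g (closure_of_system (fixpoints f \<inter> fixpoints g))"
    unfolding is_lub_in_def using cl f g closure_ops_le_iff_fixpoints by auto
  then show "join_in closure_ops f g \<in> closure_ops"
    and "fixpoints (join_in closure_ops f g) = fixpoints f \<inter> fixpoints g"
    using cl join_in_eqI by metis+
qed

lemma closure_ops_meet:
  fixes f g :: "'a::{finite,lattice} \<Rightarrow> 'a"
  assumes f: "f \<in> closure_ops" and g: "g \<in> closure_ops"
    and S: "closure_system S" and "fixpoints f \<union> fixpoints g \<subseteq> S"
    and least: "\<And>S'. closure_system S' \<Longrightarrow> fixpoints f \<union> fixpoints g \<subseteq> S' \<Longrightarrow> S \<subseteq> S'"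
  shows "meet_in closure_ops f g \<in> closure_ops"
    and "fixpoints (meet_in closure_ops f g) = S"
proof -
  note cl = closure_of_system_closure_ops[OF S]
  have "h \<le> closure_of_system S" if "h \<in> closure_ops" "h \<le> f" "h \<le> g" for h
  proof -
    have "fixpoints f \<union> fixpoints g \<subseteq> fixpoints h"
      using that f g closure_ops_le_iff_fixpoints by auto
    then show ?thesis
      using least[OF closure_system_fixpoints] that(1) cl closure_ops_le_iff_fixpoints by metis
  qed
  moreover have "closure_of_system S \<le> f" "closure_of_system S \<le> g"
    using closure_ops_le_iff_fixpoints[OF cl(1) f] closure_ops_le_iff_fixpoints[OF cl(1) g]
      cl(2) assms(4) by auto
  ultimately have "is_glb_in closure_ops f g (closure_of_system S)"
    unfolding is_glb_in_def using cl by auto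
  then show "meet_in closure_ops f g \<in> closure_ops"
    and "fixpoints (meet_in closure_ops f g) = S"
    using cl meet_in_eqI by metis+
qed

lemma closure_system_chain:
  assumes "\<forall>x y::'a::{finite,lattice}. x \<le> y \<or> y \<le> x" and "Sup_fin UNIV \<in> (S :: 'a set)"
  shows "closure_system S"
  using assms by (auto simp: closure_system_def) (metis inf_absorb1 inf_absorb2)

lemma chain_closure_ops_meet:
  assumes chain: "\<forall>x y::'a::{finite,lattice}. x \<le> y \<or> y \<le> x"
    and f: "(f :: 'a \<Rightarrow> 'a) \<in> closure_ops" and g: "g \<in> closure_ops"
  shows "meet_in closure_ops f g \<in> closure_ops"
    and "fixpoints (meet_in closure_ops f g) = fixpoints f \<union> fixpoints g"
proof -
  have "Sup_fin UNIV \<in> fixpoints f"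
    using closure_system_fixpoints[OF f] by (simp add: closure_system_def)
  then have "closure_system (fixpoints f \<union> fixpoints g)"
    by (intro closure_system_chain[OF chain]) simp
  then show "meet_in closure_ops f g \<in> closure_ops"
    and "fixpoints (meet_in closure_ops f g) = fixpoints f \<union> fixpoints g"
    using closure_ops_meet[OF f g] by auto
qed

lemma chain_closure_ops_distributive_modular:
  assumes chain: "\<forall>x y::'a::{finite,lattice}. x \<le> y \<or> y \<le> x"
  shows "distributive_in (closure_ops :: ('a \<Rightarrow> 'a) set)"
    and "modular_in (closure_ops :: ('a \<Rightarrow> 'a) set)"
proof -
  note J = closure_ops_join and M = chain_closure_ops_meet[OF chain]
  show "distributive_in (closure_ops :: ('a \<Rightarrow> 'a) set)"
    unfolding distributive_in_def
    by (intro ballI closure_ops_eqI) (auto simp: J M)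
  show "modular_in (closure_ops :: ('a \<Rightarrow> 'a) set)"
    unfolding modular_in_def
    by (intro ballI impI closure_ops_eqI) (auto simp: J M closure_ops_le_iff_fixpoints)
qed

lemma incomparable_closure_ops_not_modular_distributive:
  fixes a b :: "'a::{finite,lattice}"
  assumes ab: "\<not> a \<le> b" and ba: "\<not> b \<le> a"
  shows "\<not> modular_in (closure_ops :: ('a \<Rightarrow> 'a) set)"
    and "\<not> distributive_in (closure_ops :: ('a \<Rightarrow> 'a) set)"
proof -
  define T where "T = Sup_fin (UNIV :: 'a set)"
  define m where "m = inf a b"
  have T_ge: "x \<le> T" for x unfolding T_def by (rule le_Sup_fin_UNIV)
  have distinct: "m \<noteq> a" "m \<noteq> b" "m \<noteq> T" "a \<noteq> b" "a \<noteq> T" "b \<noteq> T"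
    using ab ba T_ge[of a] T_ge[of b] unfolding m_def
    by (auto simp flip: inf.absorb_iff1 inf.absorb_iff2)
  have systems: "closure_system {T}" "closure_system {a, T}" "closure_system {b, T}"
    "closure_system {m, a, T}" "closure_system {m, a, b, T}"
    using T_ge by (auto simp: closure_system_def T_def[symmetric] m_def
        inf_absorb1 inf_absorb2 inf_commute inf_left_commute)
  define u p q y t where "u = closure_of_system {m, a, b, T}"
    and "p = closure_of_system {m, a, T}" and "q = closure_of_system {a, T}"
    and "y = closure_of_system {b, T}" and "t = closure_of_system {T}"
  note ops = systems[THEN closure_of_system_closure_ops(1), folded u_def p_def q_def y_def t_def]
  note fp = systems[THEN closure_of_system_closure_ops(2), folded u_def p_def q_def y_def t_def]
  have "{m, a, b, T} \<subseteq> S'" if "closure_system S'" "fixpoints q \<union> fixpoints y \<subseteq> S'" for S'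
    using that fp by (auto simp: closure_system_def m_def)
  note meet = closure_ops_meet[OF ops(2,3) systems(5), OF _ this]
  have "meet_in closure_ops q y = u"
    using meet fp ops by (auto intro: closure_ops_eqI)
  moreover have "join_in closure_ops p y = t"
    using closure_ops_join[OF ops(4,3)] fp distinct ops by (auto intro: closure_ops_eqI)
  moreover have "u \<le> p" "p \<le> q" "q \<le> t" "p \<noteq> q"
    using fp ops distinct by (auto simp: closure_ops_le_iff_fixpoints)
  ultimately show "\<not> modular_in (closure_ops :: ('a \<Rightarrow> 'a) set)"
    and "\<not> distributive_in (closure_ops :: ('a \<Rightarrow> 'a) set)"
    using pentagon_not_modular_distributive[of u p q y t closure_ops] ops by auto
qed

theorem mainTheorem8:
  shows "((\<forall>x y :: 'a::{finite,lattice}. x \<le> y \<or> y \<le> x)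
            \<longleftrightarrow> distributive_in (closure_ops :: ('a \<Rightarrow> 'a) set))
       \<and> (distributive_in (closure_ops :: ('a \<Rightarrow> 'a) set)
            \<longleftrightarrow> modular_in (closure_ops :: ('a \<Rightarrow> 'a) set))"
proof (cases "\<forall>x y :: 'a. x \<le> y \<or> y \<le> x")
  case True
  then show ?thesis using chain_closure_ops_distributive_modular by blast
next
  case False
  then obtain a b :: 'a where "\<not> a \<le> b" "\<not> b \<le> a" by blast
  then show ?thesis using incomparable_closure_ops_not_modular_distributive False by blast
qed

end
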